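(* Let $T>0$, let $\eta$ be a low path of type $w_0$, ${\bf i}=(i_1,\dots,i_m)$ a reduced word for $w_0$ and $(t_1,\dots,t_m)\in\mathbb R_{>0}^m$. There is a unique $\pi\in\mathcal C_0([0,T],\mathfrak a)$ such that, writing $\eta_0=\pi$ and $\eta_j=e^{-\infty}_{s_{i_1}\cdots s_{i_j}}\pi$: $e^{-\infty}_{w_0}\pi=\eta$, $\eta_j=e^{-\infty}_{\alpha_{i_j}}\eta_{j-1}$, and $t_j=1/\int_0^Te^{-\alpha_{i_j}(\eta_{j-1}(s))}ds$ for $j=1,\dots,m$. It is given by $\pi=T_z\eta$ with $z=x_{i_1}(t_1)\cdots x_{i_m}(t_m)$.
   Context: $G$ is a simply-connected complex semisimple Lie group, $\Delta=\{\alpha_i\}$ simple roots, $\mathfrak a$ the real Cartan subalgebra, $(e_\alpha,f_\alpha,\alpha^\vee)$ Chevalley generators, $x_i(t)=\exp(te_{\alpha_i})$, $W$ the Weyl group with length $\ell$ and longest element $w_0$. $\rho^\vee=\sum_\alpha\omega^\vee_\alpha$, $(\omega^\vee_\alpha)$ the basis of $\mathfrak a$ dual to the simple roots. Constants $c_w$: $c_e=0$, and $c_w=s_\alpha c_u-\log((u\alpha)(\rho^\vee))\alpha^\vee$ whenever $w=us_\alpha$, $\ell(w)=\ell(u)+1$ (independent of decomposition). A low path of type $w$ is a continuous $\pi:[0,T)\to\mathfrak a$ with $\pi(0)=0$ and $\pi(t)=C_\pi+\log(T-t)(\rho^\vee-w^{-1}\rho^\vee)+c_w+o(1)$ as $t\to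 T$ for some $C_\pi\in\mathfrak a$. $e^{-\infty}_\alpha\pi(t)=\pi(t)+\log(1-\int_0^te^{-\alpha(\pi)}/\int_0^Te^{-\alpha(\pi)})\alpha^\vee$, $0\le t<T$; $e^{-\infty}_w=e^{-\infty}_{\alpha_{j_l}}\circ\cdots\circ e^{-\infty}_{\alpha_{j_1}}$ for reduced $w=s_{j_1}\cdots s_{j_l}$. For $c>0$, $T_{x_\alpha(c)}\eta(t)=\eta(t)+\log(1+c\int_0^te^{-\alpha(\eta(s))}ds)\alpha^\vee$, and $T_z=T_{x_{i_1}(t_1)}\circ\cdots\circ T_{x_{i_m}(t_m)}$ for $z=x_{i_1}(t_1)\cdots x_{i_m}(t_m)$ (equivalently $T_z\eta(t)=\log[zB_t(\eta)]_0$, with $[\cdot]_0$ the torus part of the Gauss decomposition and $B_t$ the flow $B_t(\eta)=\big(\sum_k\sum_{j}\int_{t\ge t_k\ge\dots\ge t_1\ge0}e^{-\sum_r\alpha_{j_r}(\eta(t_r))}f_{j_1}\cdots f_{j_k}\big)e^{\eta(t)}$). $\mathcal C_0([0,T],\mathfrak a)$: continuous paths on $[0,T]$ with $\pi(0)=0$. *)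

theory Defs
  imports "HOL-Analysis.Analysis"
begin

text \<open>Coordinates: the real Cartan subalgebra a is identified with real^'n, 'n indexing
the simple roots, via x |-> (alpha_i(x))_i.  So alpha_i(x) = x$i, the coroot alpha_i^vee
has coordinates (alpha_j(alpha_i^vee))_j = row i of the Cartan matrix A
(A$i$j = alpha_j(alpha_i^vee)), and rho^vee = (1,...,1).\<close>

definition cartan_finite :: "real^'n^'n \<Rightarrow> bool" where
  "cartan_finite A \<longleftrightarrow>
     (\<forall>i. A$i$i = 2) \<and> (\<forall>i j. i \<noteq> j \<longrightarrow> A$i$j \<le> 0) \<and> (\<forall>i j. A$i$j \<in> \<int>) \<and>
     (\<exists>d::real^'n. (\<forall>i. d$i > 0) \<and> (\<forall>i j. d$i * A$i$j = d$j * A$j$i) \<and>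
        (\<forall>x::real^'n. x \<noteq> 0 \<longrightarrow> (\<Sum>i\<in>UNIV. \<Sum>j\<in>UNIV. x$i * d$i * A$i$j * x$j) > 0))"

definition coroot :: "real^'n^'n \<Rightarrow> 'n \<Rightarrow> real^'n" where
  "coroot A i = A $ i"

definition rhov :: "real^'n" where
  "rhov = (\<chi> i. 1)"

definition sref :: "real^'n^'n \<Rightarrow> 'n \<Rightarrow> real^'n \<Rightarrow> real^'n" where
  "sref A i x = x - (x$i) *\<^sub>R coroot A i"

fun wmap :: "real^'n^'n \<Rightarrow> 'n list \<Rightarrow> real^'n \<Rightarrow> real^'n" where
  "wmap A [] = id"
| "wmap A (j # js) = sref A j \<circ> wmap A js"

definition weyl :: "real^'n^'n \<Rightarrow> (real^'n \<Rightarrow> real^'n) set" where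
  "weyl A = range (wmap A)"

definition wlen :: "real^'n^'n \<Rightarrow> (real^'n \<Rightarrow> real^'n) \<Rightarrow> nat" where
  "wlen A w = (LEAST n. \<exists>ws. length ws = n \<and> wmap A ws = w)"

definition is_longest :: "real^'n^'n \<Rightarrow> (real^'n \<Rightarrow> real^'n) \<Rightarrow> bool" where
  "is_longest A w \<longleftrightarrow> w \<in> weyl A \<and> (\<forall>u\<in>weyl A. wlen A u \<le> wlen A w)"

text \<open>c on reversed words: crev A (rev (ws @ [j])) = s_j (c_{ws}) - log((u alpha_j)(rho^vee)) alpha_j^vee
 with u = wmap ws, and (u alpha)(x) = alpha(u^{-1} x).\<close>
fun crev :: "real^'n^'n \<Rightarrow> 'n list \<Rightarrow> real^'n" where
  "crev A [] = 0"
| "crev A (j # rs) = sref A j (crev A rs) - ln ((inv (wmap A (rev rs)) rhov) $ j) *\<^sub>R coroot A j"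

definition cconst :: "real^'n^'n \<Rightarrow> (real^'n \<Rightarrow> real^'n) \<Rightarrow> real^'n" where
  "cconst A w = crev A (rev (SOME ws. wmap A ws = w \<and> length ws = wlen A w))"

definition low_path :: "real^'n^'n \<Rightarrow> real \<Rightarrow> (real^'n \<Rightarrow> real^'n) \<Rightarrow> (real \<Rightarrow> real^'n) \<Rightarrow> bool" where
  "low_path A T w p \<longleftrightarrow> continuous_on {0..<T} p \<and> p 0 = 0 \<and>
     (\<exists>C. ((\<lambda>t. p t - (C + ln (T - t) *\<^sub>R (rhov - inv w rhov) + cconst A w)) \<longlongrightarrow> 0) (at_left T))"

definition einf :: "real^'n^'n \<Rightarrow> real \<Rightarrow> 'n \<Rightarrow> (real \<Rightarrow> real^'n) \<Rightarrow> real \<Rightarrow> real^'n" where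
  "einf A T i p = (\<lambda>t. p t + ln (1 - integral {0..t} (\<lambda>s. exp (- (p s $ i)))
                                     / integral {0..T} (\<lambda>s. exp (- (p s $ i)))) *\<^sub>R coroot A i)"

text \<open>e^{-infty}_{s_{j1}...s_{jl}} = e_{j_l} o ... o e_{j_1}\<close>
definition einf_word :: "real^'n^'n \<Rightarrow> real \<Rightarrow> 'n list \<Rightarrow> (real \<Rightarrow> real^'n) \<Rightarrow> real \<Rightarrow> real^'n" where
  "einf_word A T ws p = foldl (\<lambda>q i. einf A T i q) p ws"

definition Tx :: "real^'n^'n \<Rightarrow> 'n \<Rightarrow> real \<Rightarrow> (real \<Rightarrow> real^'n) \<Rightarrow> real \<Rightarrow> real^'n" where
  "Tx A i c p = (\<lambda>t. p t + ln (1 + c * integral {0..t} (\<lambda>s. exp (- (p s $ i)))) *\<^sub>R coroot A i)"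

text \<open>T_z for z = x_{i1}(t1) ... x_{im}(tm), given as the list [(i1,t1),...,(im,tm)].\<close>
fun Tz :: "real^'n^'n \<Rightarrow> ('n \<times> real) list \<Rightarrow> (real \<Rightarrow> real^'n) \<Rightarrow> real \<Rightarrow> real^'n" where
  "Tz A [] p = p"
| "Tz A ((i, c) # zs) p = Tx A i c (Tz A zs p)"

definition sol_cond :: "real^'n^'n \<Rightarrow> real \<Rightarrow> 'n list \<Rightarrow> real list \<Rightarrow> (real \<Rightarrow> real^'n)
     \<Rightarrow> (real \<Rightarrow> real^'n) \<Rightarrow> bool" where
  "sol_cond A T ws ts \<eta> p \<longleftrightarrow>
     continuous_on {0..T} p \<and> p 0 = 0 \<and>
     (\<forall>t\<in>{0..<T}. einf_word A T ws p t = \<eta> t) \<and>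
     (\<forall>j<length ws. ts ! j = 1 / integral {0..T} (\<lambda>s. exp (- (einf_word A T (take j ws) p s $ (ws ! j)))))"

end

theory Submission
  imports Defs
begin

text \<open>Write J(t) for the integral of exp(-alpha_i(p)) over [0,t].  The map T_{x_i(c)} adds
  ln(1 + c J) coroot_i to p; since alpha_i(coroot_i) = 2, the new path has integral J/(1 + c J),
  so these maps form a one-parameter group in c, and e^{-infty}_alpha_i is the member with
  c = -1/J(T).  Hence T_{x_i(c)} inverts e^{-infty}_alpha_i as soon as c = 1/J(T), and
  uniqueness follows by peeling the factors of z off one at a time.

  For existence, the logarithmic asymptotics of the low path eta are pushed through
  T_{x_{i_m}(t_m)}, ..., T_{x_{i_1}(t_1)}.  At step j, exp(-alpha_{i_j}) blows up like
  (T - t)^(-b) with b = 1 + (s_{i_1} ... s_{i_{j-1}} alpha_{i_j})(rho^vee) > 1, because the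
  word is reduced; so J diverges, the transformed path has total integral exactly 1/t_j, and the
  rate changes by a reflection.  At the end the rate is 0, and T_z eta extends continuously to T.

  Positivity of the roots s_{i_1} ... s_{i_{j-1}} alpha_{i_j} is derived from the Cartan matrix
  alone, by the classical induction on length through rank-two parabolic subgroups, where a
  finite computation handles the six possible rank-two Cartan matrices.\<close>

section \<open>Simple reflections and reduced words\<close>

definition reduced :: "real^'n^'n \<Rightarrow> 'n list \<Rightarrow> bool" where
  "reduced A ws \<longleftrightarrow> wlen A (wmap A ws) = length ws"

lemma wmap_append: "wmap A (xs @ ys) = wmap A xs \<circ> wmap A ys"
  by (induction xs) auto

lemma sref_nth: "sref A i x $ k = x$k - x$i * A$i$k"
  by (simp add: sref_def coroot_def)

lemma linear_sref: "linear (sref A i)"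
  by (rule linearI) (auto simp: sref_def algebra_simps vec_eq_iff)

lemma linear_wmap: "linear (wmap A ws)"
proof (induction ws)
  case Nil show ?case using linear_id by (simp add: id_def)
next
  case (Cons j ws) show ?case using linear_compose[OF Cons linear_sref[of A j]] by (simp add: o_def)
qed

lemma wlen_le: "wlen A (wmap A ws) \<le> length ws"
  unfolding wlen_def by (rule Least_le) auto

lemma wlen_attained: "\<exists>ws'. length ws' = wlen A (wmap A ws) \<and> wmap A ws' = wmap A ws"
  unfolding wlen_def by (rule LeastI_ex) auto

lemma reduced_take:
  assumes "reduced A ws" "k \<le> length ws"
  shows "reduced A (take k ws)"
proof (rule ccontr)
  assume "\<not> reduced A (take k ws)"
  then have lt: "wlen A (wmap A (take k ws)) < k"
    using wlen_le[of A "take k ws"] assms(2) by (simp add: reduced_def)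
  obtain x where x: "length x = wlen A (wmap A (take k ws))" "wmap A x = wmap A (take k ws)"
    using wlen_attained by blast
  have "wmap A (x @ drop k ws) = wmap A ws"
    using x(2) wmap_append[of A "take k ws" "drop k ws"] by (simp add: wmap_append)
  then have "wlen A (wmap A ws) \<le> length x + (length ws - k)" using wlen_le[of A "x @ drop k ws"] by simp
  then show False using lt x(1) assms by (simp add: reduced_def)
qed

lemma sum_UNIV_two:
  fixes g :: "'n::finite \<Rightarrow> 'a::comm_monoid_add"
  assumes "s \<noteq> s'" "\<And>i. i \<noteq> s \<Longrightarrow> i \<noteq> s' \<Longrightarrow> g i = 0"
  shows "sum g UNIV = g s + g s'"
  using assms by (subst sum.mono_neutral_right[of UNIV "{s,s'}"]) auto

lemma int_pair_prod_lt_4: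
  fixes P Q :: int
  assumes "P \<ge> 0" "Q \<ge> 0" "P * Q < 4" "P = 0 \<longleftrightarrow> Q = 0"
  shows "(P, Q) \<in> {(0,0),(1,1),(1,2),(2,1),(1,3),(3,1)}"
proof (cases "P = 0")
  case True then show ?thesis using assms by auto
next
  case False
  then have "P \<ge> 1" "Q \<ge> 1" using assms by auto
  then have "P \<le> 3" "Q \<le> 3" using assms(3) by (smt (verit) mult_le_cancel_left1 mult_le_cancel_right1)+
  then have "P \<in> {1,2,3}" "Q \<in> {1,2,3}" using \<open>P \<ge> 1\<close> \<open>Q \<ge> 1\<close> by auto
  then show ?thesis using assms(3) by auto
qed

context
  fixes A :: "real^'n^'n"
  assumes cf: "cartan_finite A"
begin

lemma cartan_diag: "A$i$i = 2"
  using cf unfolding cartan_finite_def by auto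

lemma coroot_nth_self: "coroot A i $ i = 2"
  using cartan_diag by (simp add: coroot_def)

lemma sref_nth_self: "sref A i x $ i = - (x $ i)"
  using cartan_diag by (simp add: sref_def coroot_def algebra_simps)

lemma sref_sref: "sref A i (sref A i x) = x"
  by (simp add: sref_def sref_nth_self coroot_nth_self algebra_simps)

lemma wmap_rev_wmap: "wmap A (rev ws) (wmap A ws x) = x"
  by (induction ws arbitrary: x) (auto simp: wmap_append sref_sref)

lemma wmap_wmap_rev: "wmap A ws (wmap A (rev ws) x) = x"
  using wmap_rev_wmap[of "rev ws"] by simp

lemma inv_wmap: "inv (wmap A ws) = wmap A (rev ws)"
  by (rule inv_equality) (simp_all add: wmap_rev_wmap wmap_wmap_rev)

lemma wmap_cancel_square: "wmap A (u @ j # j # v) = wmap A (u @ v)"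
  by (auto simp: wmap_append sref_sref fun_eq_iff)

lemma wmap_snoc_comp_sref: "wmap A (u @ [j]) \<circ> sref A j = wmap A u"
  by (auto simp: wmap_append sref_sref fun_eq_iff)

lemma det_matrix_sref: "det (matrix (sref A i)) = -1"
proof -
  let ?M = "transpose (matrix (sref A i))"
  have M: "?M $ j $ r = (if j = r then 1 else 0) - (if j = i then A$i$r else 0)" for j r
    by (simp add: transpose_def matrix_def sref_nth axis_def)
  let ?x = "\<Sum>j\<in>UNIV - {i}. (A$i$j) *s row j ?M"
  have "?x \<in> vec.span {row j ?M |j. j \<noteq> i}"
    by (intro vec.span_sum vec.span_scale vec.span_base) auto
  from det_row_span[OF this]
  have e: "det (\<chi> k. if k = i then row i ?M + ?x else row k ?M) = det ?M" .
  have rowj: "row j ?M = axis j 1" if "j \<noteq> i" for j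
    using that by (simp add: row_def M axis_def vec_eq_iff)
  have xe: "?x $ r = (if r = i then 0 else A$i$r)" for r
  proof -
    have "?x = (\<Sum>j\<in>UNIV - {i}. A$i$j *s (axis j 1 :: real^'n))"
      by (intro sum.cong) (use rowj in \<open>auto simp del: row_transpose\<close>)
    then have "?x $ r = (\<Sum>j\<in>UNIV - {i}. A$i$j * (axis j 1 :: real^'n) $ r)"
      by (simp add: sum_component)
    also have "\<dots> = (\<Sum>j\<in>UNIV - {i}. if j = r then A$i$j else 0)"
      by (intro sum.cong) (auto simp: axis_def)
    also have "\<dots> = (if r = i then 0 else A$i$r)"
      by (simp add: sum.delta')
    finally show ?thesis .
  qed
  have ent: "(\<chi> k. if k = i then row i ?M + ?x else row k ?M) $ k $ r
      = (if k = r then (if k = i then -1 else 1) else 0)" for k r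
  proof (cases "k = i")
    case True
    have "(row i ?M + ?x) $ r = (if k = r then (if k = i then -1 else 1) else 0)"
      using True unfolding vector_add_component xe by (simp add: row_def M cartan_diag)
    then show ?thesis using True by simp
  next
    case False
    then show ?thesis by (simp add: rowj axis_def del: row_transpose)
  qed
  have "det (\<chi> k. if k = i then row i ?M + ?x else row k ?M)
      = prod (\<lambda>k. (\<chi> k. if k = i then row i ?M + ?x else row k ?M) $ k $ k) UNIV"
    by (rule det_diagonal) (simp only: ent, simp)
  also have "\<dots> = prod (\<lambda>k. if k = i then -1 else 1) UNIV"
    by (simp only: ent, simp)
  also have "\<dots> = -1" by (simp add: prod.delta)
  finally show ?thesis using e by simp
qed

lemma det_matrix_wmap: "det (matrix (wmap A ws)) = (-1) ^ length ws"
proof (induction ws)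
  case Nil then show ?case by (simp add: matrix_id_mat_1[unfolded id_def])
next
  case (Cons j ws)
  have "matrix (wmap A (j # ws)) = matrix (sref A j) ** matrix (wmap A ws)"
    by (simp add: matrix_compose linear_sref linear_wmap)
  then show ?case using Cons by (simp add: det_mul det_matrix_sref del: wmap.simps)
qed

lemma wmap_eq_imp_length_parity: "wmap A xs = wmap A ys \<Longrightarrow> even (length xs) = even (length ys)"
  using det_matrix_wmap[of xs] det_matrix_wmap[of ys]
  by (metis neg_one_even_power neg_one_odd_power one_neq_neg_one)

lemma cartan_rank2_prod_lt_4:
  assumes "s \<noteq> s'"
  shows "A$s$s' * A$s'$s < 4" and "A$s$s' = 0 \<longleftrightarrow> A$s'$s = 0"
proof -
  from cf obtain d :: "real^'n" where dpos: "\<forall>i. d$i > 0" and dsym: "\<forall>i j. d$i * A$i$j = d$j * A$j$i"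
    and pd: "\<forall>x::real^'n. x \<noteq> 0 \<longrightarrow> (\<Sum>i\<in>UNIV. \<Sum>j\<in>UNIV. x$i * d$i * A$i$j * x$j) > 0"
    unfolding cartan_finite_def by (elim conjE exE) auto
  define p where "p = - A$s$s'"
  define q where "q = - A$s'$s"
  have sym: "d$s * p = d$s' * q" using dsym by (simp add: p_def q_def)
  define x :: "real^'n" where "x = (\<chi> k. if k = s then d$s * p else if k = s' then 2 * d$s else 0)"
  have xs: "x$s = d$s * p" "x$s' = 2 * d$s" "\<And>k. k \<noteq> s \<Longrightarrow> k \<noteq> s' \<Longrightarrow> x$k = 0"
    using assms by (auto simp: x_def)
  have "x \<noteq> 0" using xs(2) dpos by (metis mult_eq_0_iff zero_index zero_neq_numeral less_irrefl)
  with pd have Q: "(\<Sum>i\<in>UNIV. \<Sum>j\<in>UNIV. x$i * d$i * A$i$j * x$j) > 0" by blast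
  have inner: "(\<Sum>j\<in>UNIV. x$i * d$i * A$i$j * x$j) =
      x$i * d$i * A$i$s * x$s + x$i * d$i * A$i$s' * x$s'" for i
    by (rule sum_UNIV_two[OF assms]) (simp add: xs)
  have "(\<Sum>i\<in>UNIV. \<Sum>j\<in>UNIV. x$i * d$i * A$i$j * x$j) =
      (x$s * d$s * A$s$s * x$s + x$s * d$s * A$s$s' * x$s') +
      (x$s' * d$s' * A$s'$s * x$s + x$s' * d$s' * A$s'$s' * x$s')"
    unfolding inner by (rule sum_UNIV_two[OF assms]) (simp add: xs)
  also have "\<dots> = 2 * (d$s)^2 * d$s' * (4 - p * q)"
    unfolding xs cartan_diag using sym by (simp add: p_def q_def power2_eq_square algebra_simps)
  finally have "2 * (d$s)^2 * d$s' * (4 - p * q) > 0" using Q by simp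
  then show "A$s$s' * A$s'$s < 4"
    using dpos by (simp add: p_def q_def) (smt (verit) mult_pos_pos zero_less_power zero_less_mult_pos)
  show "A$s$s' = 0 \<longleftrightarrow> A$s'$s = 0"
    using sym dpos by (simp add: p_def q_def) (metis mult_eq_0_iff less_irrefl)
qed

lemma cartan_rank2_cases:
  assumes "s \<noteq> s'"
  shows "(-A$s$s', -A$s'$s) \<in> {(0,0),(1,1),(1,2),(2,1),(1,3),(3,1)}"
proof -
  have nonpos: "A$i$j \<le> 0" if "i \<noteq> j" for i j using cf that unfolding cartan_finite_def by simp
  have ints: "A$i$j \<in> \<int>" for i j using cf unfolding cartan_finite_def by simp
  obtain P where P: "-A$s$s' = of_int P" using ints[of s s'] by (elim Ints_cases) (metis of_int_minus)
  obtain Q where Q: "-A$s'$s = of_int Q" using ints[of s' s] by (elim Ints_cases) (metis of_int_minus)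
  have "real_of_int P \<ge> 0" "real_of_int Q \<ge> 0" "real_of_int P * real_of_int Q < 4"
    "real_of_int P = 0 \<longleftrightarrow> real_of_int Q = 0"
    using nonpos[OF assms] nonpos[OF assms[symmetric]] cartan_rank2_prod_lt_4[OF assms]
    unfolding P[symmetric] Q[symmetric] by auto
  then have "P \<ge> 0" "Q \<ge> 0" "P * Q < 4" "P = 0 \<longleftrightarrow> Q = 0"
    by (simp_all flip: of_int_mult)
  then show ?thesis using P Q int_pair_prod_lt_4 by auto
qed

end

section \<open>Rank-two subsystems\<close>

fun alt_word :: "nat \<Rightarrow> 'a \<Rightarrow> 'a \<Rightarrow> 'a list" where
  "alt_word 0 x y = []"
| "alt_word (Suc k) x y = alt_word k y x @ [x]"

text \<open>The action of s (for True) and s' (for False) on the coordinates (alpha_s, alpha_s'),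
  with p = -A_{s s'} and q = -A_{s' s}.\<close>
definition refl2 :: "real \<Rightarrow> real \<Rightarrow> bool \<Rightarrow> real \<times> real \<Rightarrow> real \<times> real" where
  "refl2 p q b z = (if b then (- fst z, snd z + p * fst z) else (fst z + q * snd z, - snd z))"

lemma alt_word_length[simp]: "length (alt_word k x y) = k"
  by (induction k arbitrary: x y) auto

lemma alt_word_set: "set (alt_word k x y) \<subseteq> {x, y}"
  by (induction k arbitrary: x y) auto

lemma map_alt_word: "map f (alt_word k x y) = alt_word k (f x) (f y)"
  by (induction k arbitrary: x y) auto

lemma alt_word_split:
  "alt_word (a + b) x y = alt_word a (if even b then x else y) (if even b then y else x) @ alt_word b x y"
  by (induction b arbitrary: x y) auto

lemma alt_word_Suc_hd: "alt_word (Suc b) x y = (if even b then x else y) # alt_word b x y"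
  by (induction b arbitrary: x y) auto

lemma alt_word_if_no_square:
  assumes "s \<noteq> s'" "set l \<subseteq> {s, s'}" "l \<noteq> []"
    and "\<And>u j v. l = u @ j # j # v \<Longrightarrow> False"
  shows "l = alt_word (length l) (last l) (if last l = s then s' else s)"
  using assms(2-4)
proof (induction l rule: rev_induct)
  case Nil then show ?case by simp
next
  case (snoc x l0)
  show ?case
  proof (cases "l0 = []")
    case True then show ?thesis using snoc.prems assms(1) by auto
  next
    case False
    have nd: "\<And>u j v. l0 = u @ j # j # v \<Longrightarrow> False"
    proof -
      fix u j v assume "l0 = u @ j # j # v"
      then have "l0 @ [x] = u @ j # j # (v @ [x])" by simp
      then show False by (rule snoc.prems(3))
    qed
    have IH: "l0 = alt_word (length l0) (last l0) (if last l0 = s then s' else s)"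
      using snoc.IH[OF _ False nd] snoc.prems(1) by auto
    have ne: "last l0 \<noteq> x"
    proof
      assume "last l0 = x"
      then have "l0 = butlast l0 @ [x]" using append_butlast_last_id[OF False] by simp
      then have "l0 @ [x] = butlast l0 @ x # x # []" by (metis append_Cons append_Nil append_assoc)
      then show False using snoc.prems(3) by blast
    qed
    have "last l0 \<in> set l0" using False by simp
    then have lx: "last l0 \<in> {s, s'}" "x \<in> {s, s'}" using snoc.prems(1) by auto
    then have o: "last l0 = (if x = s then s' else s)" using ne assms(1) by auto
    have ox: "(if last l0 = s then s' else s) = x" using o lx assms(1) by auto
    have "l0 = alt_word (length l0) (if x = s then s' else s) x"
      using IH unfolding ox o[symmetric] .
    then have "l0 @ [x] = alt_word (length l0) (if x = s then s' else s) x @ [x]" by simp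
    then show ?thesis by simp
  qed
qed

lemma linear_refl2: "linear (refl2 p q b)"
  by (rule linearI) (auto simp: refl2_def algebra_simps)

lemma linear_foldr_refl2: "linear (foldr (refl2 p q) bs)"
proof (induction bs)
  case Nil show ?case using linear_id by (simp add: id_def)
next
  case (Cons b bs) show ?case using linear_compose[OF Cons linear_refl2[of p q b]] by (simp add: o_def)
qed

lemma fst_foldr_refl2:
  "fst (foldr (refl2 p q) bs (z1, z2)) =
     fst (foldr (refl2 p q) bs (1, 0)) * z1 + fst (foldr (refl2 p q) bs (0, 1)) * z2"
proof -
  have "(z1, z2) = z1 *\<^sub>R (1, 0) + z2 *\<^sub>R (0::real, 1::real)" by simp
  then have "foldr (refl2 p q) bs (z1, z2) =
      z1 *\<^sub>R foldr (refl2 p q) bs (1, 0) + z2 *\<^sub>R foldr (refl2 p q) bs (0, 1)"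
    using linear_cmul[OF linear_foldr_refl2[of p q bs]] linear_add[OF linear_foldr_refl2[of p q bs]] by metis
  then show ?thesis by (simp add: mult.commute)
qed


text \<open>The finite check that replaces the classification of rank-two root systems; m is the
  order of s s'.\<close>
definition rank2_braid_positive :: "real \<Rightarrow> real \<Rightarrow> nat \<Rightarrow> bool" where
  "rank2_braid_positive p q m \<longleftrightarrow> m \<ge> 1 \<and>
     foldr (refl2 p q) (alt_word m False True) = foldr (refl2 p q) (alt_word m True False) \<and>
     (\<forall>k<m. 0 \<le> fst (foldr (refl2 p q) (rev (alt_word k False True)) (1,0)) \<and>
        0 \<le> fst (foldr (refl2 p q) (rev (alt_word k False True)) (0,1)) \<and>
        (0 < fst (foldr (refl2 p q) (rev (alt_word k False True)) (1,0)) \<or>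
         0 < fst (foldr (refl2 p q) (rev (alt_word k False True)) (0,1))))"

lemma rank2_braid_positive_exists:
  assumes "(p, q) \<in> {(0,0),(1,1),(1,2),(2,1),(1,3),(3,1)}"
  shows "\<exists>m. rank2_braid_positive p q m"
proof -
  have "rank2_braid_positive 0 0 2" "rank2_braid_positive 1 1 3"
    "rank2_braid_positive 1 2 4" "rank2_braid_positive 2 1 4"
    "rank2_braid_positive 1 3 6" "rank2_braid_positive 3 1 6"
    by (simp_all add: rank2_braid_positive_def refl2_def fun_eq_iff numeral_eq_Suc less_Suc_eq prod_eq_iff)
  then show ?thesis using assms by auto
qed

context
  fixes A :: "real^'n^'n"
  assumes cf: "cartan_finite A"
begin

lemma wmap_rank2_coords:
  assumes ss: "s \<noteq> s'" and lI: "set l \<subseteq> {s, s'}"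
  shows "((wmap A l z)$s, (wmap A l z)$s') =
    foldr (refl2 (-A$s$s') (-A$s'$s)) (map (\<lambda>j. j = s) l) (z$s, z$s')"
  using lI
proof (induction l)
  case Nil then show ?case by simp
next
  case (Cons j l)
  then have IH: "((wmap A l z)$s, (wmap A l z)$s') =
      foldr (refl2 (-A$s$s') (-A$s'$s)) (map (\<lambda>j. j = s) l) (z$s, z$s')"
    and j: "j = s \<or> j = s'" by auto
  have fr: "foldr (refl2 (-A$s$s') (-A$s'$s)) (map (\<lambda>j. j = s) (j # l)) (z$s, z$s')
      = refl2 (-A$s$s') (-A$s'$s) (j = s) ((wmap A l z)$s, (wmap A l z)$s')"
    using IH by simp
  from j ss show ?case unfolding fr by (auto simp: refl2_def sref_nth cartan_diag[OF cf])
qed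

lemma wmap_rank2_span:
  assumes "set l \<subseteq> {s, s'}"
  shows "\<exists>f g. wmap A l z = z + f *\<^sub>R coroot A s + g *\<^sub>R coroot A s'"
  using assms
proof (induction l)
  case Nil show ?case by (intro exI[of _ "0::real"]) simp
next
  case (Cons j l)
  then obtain f g where fg: "wmap A l z = z + f *\<^sub>R coroot A s + g *\<^sub>R coroot A s'"
    and j: "j = s \<or> j = s'" by auto
  let ?w = "wmap A l z"
  have e: "wmap A (j # l) z = ?w - (?w $ j) *\<^sub>R coroot A j" by (simp add: sref_def)
  from j show ?case
  proof
    assume "j = s"
    then show ?thesis using e fg
      by (intro exI[of _ "f - ?w $ j"] exI[of _ g]) (simp add: algebra_simps)
  next
    assume "j = s'"
    then show ?thesis using e fg
      by (intro exI[of _ f] exI[of _ "g - ?w $ j"]) (simp add: algebra_simps)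
  qed
qed

text \<open>Words in s, s' move x inside x + span(coroots s, s'), and on that plane the coordinates
  alpha_s, alpha_s' are injective because the rank-two Cartan matrix has determinant 4 - pq \<noteq> 0.\<close>
lemma wmap_eq_if_refl2_eq:
  assumes ss: "s \<noteq> s'" and pq4: "(-A$s$s') * (-A$s'$s) < 4"
    and l1: "set l1 \<subseteq> {s, s'}" and l2: "set l2 \<subseteq> {s, s'}"
    and eq: "\<And>z. foldr (refl2 (-A$s$s') (-A$s'$s)) (map (\<lambda>j. j = s) l1) z =
                 foldr (refl2 (-A$s$s') (-A$s'$s)) (map (\<lambda>j. j = s) l2) z"
  shows "wmap A l1 = wmap A l2"
proof
  fix z
  obtain f1 g1 where 1: "wmap A l1 z = z + f1 *\<^sub>R coroot A s + g1 *\<^sub>R coroot A s'"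
    using wmap_rank2_span[OF l1] by blast
  obtain f2 g2 where 2: "wmap A l2 z = z + f2 *\<^sub>R coroot A s + g2 *\<^sub>R coroot A s'"
    using wmap_rank2_span[OF l2] by blast
  have c: "((wmap A l1 z)$s, (wmap A l1 z)$s') = ((wmap A l2 z)$s, (wmap A l2 z)$s')"
    using wmap_rank2_coords[OF ss l1] wmap_rank2_coords[OF ss l2] eq by simp
  define F where "F = f1 - f2"
  define G where "G = g1 - g2"
  define p where "p = - A$s$s'"
  define q where "q = - A$s'$s"
  have e1: "2 * F = q * G"
    using c unfolding 1 2 by (simp add: coroot_def cartan_diag[OF cf] F_def G_def q_def algebra_simps)
  have e2: "2 * G = p * F"
    using c unfolding 1 2 by (simp add: coroot_def cartan_diag[OF cf] F_def G_def p_def algebra_simps)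
  have "4 * F = q * p * F" using e1 e2 by (metis mult.assoc mult.commute mult_2 numeral_Bit0)
  then have "F * (4 - p * q) = 0" by (simp add: algebra_simps)
  moreover have "4 - p * q \<noteq> 0" using pq4 by (simp add: p_def q_def)
  ultimately have "F = 0" by simp
  then have "G = 0" using e2 by simp
  show "wmap A l1 z = wmap A l2 z" using 1 2 \<open>F = 0\<close> \<open>G = 0\<close> by (simp add: F_def G_def)
qed


lemma rank2_reduced_alt_word:
  assumes ss: "s \<noteq> s'" and lI: "set l \<subseteq> {s, s'}" and ne: "l \<noteq> []"
    and H1: "\<And>l'. set l' \<subseteq> {s, s'} \<Longrightarrow> wmap A l' = wmap A l \<Longrightarrow> length l \<le> length l'"
    and H2: "\<And>l'. set l' \<subseteq> {s, s'} \<Longrightarrow> wmap A l' = wmap A l \<circ> sref A s \<Longrightarrow> length l \<le> length l'"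
  shows "l = alt_word (length l) s' s"
proof -
  have no_square: False if "l = u @ j # j # v" for u j v
  proof -
    have "wmap A (u @ v) = wmap A l" using that wmap_cancel_square[OF cf] by simp
    moreover have "set (u @ v) \<subseteq> {s, s'}" using lI that by auto
    ultimately have "length l \<le> length (u @ v)" using H1 by blast
    then show False using that by simp
  qed
  have "last l \<noteq> s"
  proof
    assume ls: "last l = s"
    then have "l = butlast l @ [s]" using append_butlast_last_id[OF ne] by metis
    then have "wmap A (butlast l) = wmap A l \<circ> sref A s"
      using wmap_snoc_comp_sref[OF cf, of "butlast l" s] by simp
    moreover have "set (butlast l) \<subseteq> {s, s'}" using lI by (meson in_set_butlastD subset_iff)
    ultimately have "length l \<le> length (butlast l)" using H2 by blast
    moreover have "length l > 0" using ne by simp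
    ultimately show False by (simp only: length_butlast)
  qed
  moreover have "last l \<in> {s, s'}" using lI last_in_set[OF ne] by blast
  ultimately have "last l = s'" by auto
  then show ?thesis using alt_word_if_no_square[OF ss lI ne no_square] ss by simp
qed

lemma rank2_reduced_length_lt:
  assumes ss: "s \<noteq> s'" and m1: "m \<ge> 1"
    and braid: "wmap A (alt_word m s' s) = wmap A (alt_word m s s')"
    and H1: "\<And>l'. set l' \<subseteq> {s, s'} \<Longrightarrow> wmap A l' = wmap A (alt_word k s' s) \<Longrightarrow> k \<le> length l'"
    and H2: "\<And>l'. set l' \<subseteq> {s, s'} \<Longrightarrow> wmap A l' = wmap A (alt_word k s' s) \<circ> sref A s \<Longrightarrow>
               k \<le> length l'"
  shows "k < m"
proof (rule ccontr)
  assume "\<not> k < m"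
  define X where "X = (if even m then s' else s)"
  define Y where "Y = (if even m then s else s')"
  have XY: "X \<in> {s, s'}" "Y \<in> {s, s'}" by (auto simp: X_def Y_def)
  have msuc: "m = Suc (m - 1)" using m1 by simp
  have split: "alt_word k s' s = alt_word (k - m) X Y @ alt_word m s' s"
    using alt_word_split[of "k - m" m s' s] \<open>\<not> k < m\<close> by (simp add: X_def Y_def)
  have hd: "alt_word m s s' = X # alt_word (m - 1) s s'"
    using alt_word_Suc_hd[of "m - 1" s s'] m1 msuc by (cases m) (auto simp: X_def)
  show False
  proof (cases "k = m")
    case True
    have "alt_word m s s' = alt_word (m - 1) s' s @ [s]" by (subst msuc) simp
    then have "wmap A (alt_word k s' s) \<circ> sref A s = wmap A (alt_word (m - 1) s' s)"
      using braid True wmap_snoc_comp_sref[OF cf] by metis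
    moreover have "set (alt_word (m - 1) s' s) \<subseteq> {s, s'}" using alt_word_set[of "m - 1" s' s] by auto
    ultimately have "k \<le> m - 1" using H2 by fastforce
    then show False using True m1 by simp
  next
    case False
    then obtain r where r: "k - m = Suc r" using \<open>\<not> k < m\<close> not0_implies_Suc by fastforce
    have "wmap A (alt_word k s' s) = wmap A (alt_word (k - m) X Y @ alt_word m s s')"
      by (subst split) (simp add: wmap_append braid)
    also have "alt_word (k - m) X Y @ alt_word m s s' = alt_word r Y X @ X # X # alt_word (m - 1) s s'"
      unfolding r hd by simp
    finally have "wmap A (alt_word r Y X @ alt_word (m - 1) s s') = wmap A (alt_word k s' s)"
      using wmap_cancel_square[OF cf] by simp
    moreover have "set (alt_word r Y X @ alt_word (m - 1) s s') \<subseteq> {s, s'}"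
      using alt_word_set[of r Y X] alt_word_set[of "m - 1" s s'] XY by auto
    ultimately have "k \<le> r + (m - 1)" using H1 by fastforce
    then show False using r m1 by simp
  qed
qed


lemma map_eq_alt_word_bools:
  assumes "s \<noteq> s'"
  shows "map (\<lambda>j. j = s) (alt_word n s' s) = alt_word n False True"
    and "map (\<lambda>j. j = s) (alt_word n s s') = alt_word n True False"
  using assms by (simp_all add: map_alt_word)

lemma rank2_braid:
  assumes ss: "s \<noteq> s'" and m: "rank2_braid_positive (-A$s$s') (-A$s'$s) m"
  shows "wmap A (alt_word m s' s) = wmap A (alt_word m s s')"
proof (rule wmap_eq_if_refl2_eq[OF ss])
  show "(-A$s$s') * (-A$s'$s) < 4" using cartan_rank2_prod_lt_4[OF cf ss] by simp
  show "set (alt_word m s' s) \<subseteq> {s, s'}" "set (alt_word m s s') \<subseteq> {s, s'}"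
    using alt_word_set by fastforce+
  show "foldr (refl2 (-A$s$s') (-A$s'$s)) (map (\<lambda>j. j = s) (alt_word m s' s)) z =
      foldr (refl2 (-A$s$s') (-A$s'$s)) (map (\<lambda>j. j = s) (alt_word m s s')) z" for z
    using m by (simp add: map_eq_alt_word_bools[OF ss] rank2_braid_positive_def del: foldr.simps)
qed

lemma rank2_alt_word_coord:
  assumes ss: "s \<noteq> s'"
  shows "y$s = fst (foldr (refl2 (-A$s$s') (-A$s'$s)) (rev (alt_word k False True)) (1,0)) *
                 (wmap A (alt_word k s' s) y)$s +
               fst (foldr (refl2 (-A$s$s') (-A$s'$s)) (rev (alt_word k False True)) (0,1)) *
                 (wmap A (alt_word k s' s) y)$s'"
proof -
  define z where "z = wmap A (alt_word k s' s) y"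
  have y: "y = wmap A (rev (alt_word k s' s)) z" using wmap_rev_wmap[OF cf] unfolding z_def by simp
  have "map (\<lambda>j. j = s) (rev (alt_word k s' s)) = rev (alt_word k False True)"
    by (simp add: rev_map[symmetric] map_eq_alt_word_bools[OF ss])
  moreover have "set (rev (alt_word k s' s)) \<subseteq> {s, s'}" using alt_word_set by fastforce
  ultimately have "y$s =
      fst (foldr (refl2 (-A$s$s') (-A$s'$s)) (rev (alt_word k False True)) (z$s, z$s'))"
    using wmap_rank2_coords[OF ss, of "rev (alt_word k s' s)" z] y by (metis fst_conv)
  also have "\<dots> = fst (foldr (refl2 (-A$s$s') (-A$s'$s)) (rev (alt_word k False True)) (1,0)) * z$s +
      fst (foldr (refl2 (-A$s$s') (-A$s'$s)) (rev (alt_word k False True)) (0,1)) * z$s'"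
    by (rule fst_foldr_refl2)
  finally show ?thesis unfolding z_def .
qed

lemma rank2_reduced_positive:
  assumes ss: "s \<noteq> s'" and lI: "set l \<subseteq> {s, s'}"
    and H1: "\<And>l'. set l' \<subseteq> {s, s'} \<Longrightarrow> wmap A l' = wmap A l \<Longrightarrow> length l \<le> length l'"
    and H2: "\<And>l'. set l' \<subseteq> {s, s'} \<Longrightarrow> wmap A l' = wmap A l \<circ> sref A s \<Longrightarrow> length l \<le> length l'"
  shows "\<exists>a b. a \<ge> 0 \<and> b \<ge> 0 \<and> (a > 0 \<or> b > 0) \<and>
           (\<forall>y. y$s = a * (wmap A l y)$s + b * (wmap A l y)$s')"
proof (cases "l = []")
  case True
  then show ?thesis by (intro exI[of _ "1::real"] exI[of _ "0::real"]) simp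
next
  case False
  obtain m where m: "rank2_braid_positive (-A$s$s') (-A$s'$s) m"
    using rank2_braid_positive_exists cartan_rank2_cases[OF cf ss] by blast
  define k where "k = length l"
  have lk: "l = alt_word k s' s"
    unfolding k_def by (rule rank2_reduced_alt_word[OF ss lI False H1 H2])
  have "k < m"
  proof (rule rank2_reduced_length_lt[OF ss _ rank2_braid[OF ss m]])
    show "m \<ge> 1" using m by (simp add: rank2_braid_positive_def)
    show "k \<le> length l'" if "set l' \<subseteq> {s, s'}" "wmap A l' = wmap A (alt_word k s' s)" for l'
      using H1[of l'] that lk k_def by argo
    show "k \<le> length l'" if "set l' \<subseteq> {s, s'}" "wmap A l' = wmap A (alt_word k s' s) \<circ> sref A s" for l'
      using H2[of l'] that lk k_def by argo
  qed
  then show ?thesis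
    using m rank2_alt_word_coord[OF ss, of _ k] unfolding lk[symmetric] rank2_braid_positive_def by blast
qed

end

section \<open>Positivity of the roots of a reduced word\<close>

context
  fixes A :: "real^'n^'n"
  assumes cf: "cartan_finite A"
begin

text \<open>vs is chosen as short as possible among factorizations w = vs l with l a word in s, s'
  and length vs + length l = wlen A w.\<close>
lemma exists_min_coset_factorization:
  assumes ss: "s \<noteq> s'" and w: "wmap A (bw @ [s']) = w" and n: "wlen A w = Suc (length bw)"
  obtains vs l where "set l \<subseteq> {s, s'}" "wmap A (vs @ l) = w" "length vs + length l = wlen A w"
    "length vs < wlen A w" "reduced A vs"
    "\<And>t. t \<in> {s, s'} \<Longrightarrow> wlen A (wmap A vs) < wlen A (wmap A (vs @ [t]))"
proof -
  define valid where "valid vs l \<longleftrightarrow> set l \<subseteq> {s, s'} \<and> wmap A (vs @ l) = w \<and>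
    length vs + length l \<le> wlen A w" for vs l
  define N where "N = (LEAST k. \<exists>vs l. valid vs l \<and> length vs = k)"
  have "valid bw [s']" unfolding valid_def using w n by simp
  then obtain vs l where vl: "valid vs l" "length vs = N"
    using LeastI_ex[of "\<lambda>k. \<exists>vs l. valid vs l \<and> length vs = k"] unfolding N_def by blast
  have minN: "N \<le> length vs'" if "valid vs' l'" for vs' l'
    unfolding N_def by (rule Least_le) (use that in blast)
  have Nn: "N < wlen A w" using minN[OF \<open>valid bw [s']\<close>] n by simp
  have lI: "set l \<subseteq> {s, s'}" and wvl: "wmap A (vs @ l) = w" and vln: "length vs + length l \<le> wlen A w"
    using vl(1) unfolding valid_def by auto
  have "wlen A w \<le> length vs + length l" using wlen_le[of A "vs @ l"] wvl by simp
  then have len: "length vs + length l = wlen A w" using vln by simp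
  have red: "reduced A vs"
  proof (rule ccontr)
    assume "\<not> reduced A vs"
    then have lt: "wlen A (wmap A vs) < length vs" using wlen_le[of A vs] by (simp add: reduced_def)
    obtain x where x: "length x = wlen A (wmap A vs)" "wmap A x = wmap A vs" using wlen_attained by blast
    have "valid x l" unfolding valid_def using lI wvl vln x lt by (simp add: wmap_append)
    then show False using minN x lt vl(2) by fastforce
  qed
  have "wlen A (wmap A vs) < wlen A (wmap A (vs @ [t]))" if tI: "t \<in> {s, s'}" for t
  proof (rule ccontr)
    assume "\<not> ?thesis"
    then have le: "wlen A (wmap A (vs @ [t])) \<le> length vs" using red by (simp add: reduced_def)
    obtain x where x: "length x = wlen A (wmap A (vs @ [t]))" "wmap A x = wmap A (vs @ [t])"
      using wlen_attained by blast
    \<comment> \<open>by parity, a word for vs t cannot have the length of vs\<close>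
    have "even (length x) = even (length (vs @ [t]))" by (rule wmap_eq_imp_length_parity[OF cf x(2)])
    then have lt: "length x < length vs" using le x by (cases "length x = length vs") auto
    have "wmap A (x @ t # l) = wmap A (vs @ l)"
      using x(2) by (auto simp: wmap_append fun_eq_iff sref_sref[OF cf])
    then have "valid x (t # l)" unfolding valid_def using lI tI wvl vln lt by auto
    then show False using minN lt vl(2) by fastforce
  qed
  then show thesis using that lI wvl len Nn vl(2) red by blast
qed

text \<open>That is, w alpha_s is a positive root.  Induction on the length of w through the coset
  factorization w = v u with u in the subgroup generated by s and the last letter of w.\<close>
lemma ascent_imp_simple_pos:
  assumes "wlen A (wmap A ws) < wlen A (wmap A (ws @ [s]))" and "\<forall>k. (wmap A ws y)$k > 0"
  shows "y$s > 0"
  using assms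
proof (induction "wlen A (wmap A ws)" arbitrary: ws s y rule: less_induct)
  case less
  define w where "w = wmap A ws"
  define n where "n = wlen A w"
  obtain rw where rw: "length rw = n" "wmap A rw = w" using wlen_attained[of A ws] unfolding n_def w_def by blast
  have wy: "\<forall>k. (w y)$k > 0" using less.prems(2) unfolding w_def .
  have wsn: "n < wlen A (wmap A (ws @ [s]))" using less.prems(1) unfolding n_def w_def .
  show "y$s > 0"
  proof (cases "rw = []")
    case True
    then show ?thesis using rw wy by auto
  next
    case False
    define s' where "s' = last rw"
    define bw where "bw = butlast rw"
    have rwe: "rw = bw @ [s']" using False unfolding s'_def bw_def by simp
    have wsw: "wmap A (ws @ [s]) = w \<circ> sref A s" by (simp add: wmap_append w_def)
    have ss: "s \<noteq> s'"
    proof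
      assume "s = s'"
      then have "wmap A (ws @ [s]) = wmap A bw"
        using wsw rw(2) rwe wmap_snoc_comp_sref[OF cf, of bw s'] by simp
      then show False using wlen_le[of A bw] rw(1) rwe wsn by simp
    qed
    obtain vs l where lI: "set l \<subseteq> {s, s'}" and wvl: "wmap A (vs @ l) = w"
      and len: "length vs + length l = n" and vsn: "length vs < n" and red: "reduced A vs"
      and asc: "\<And>t. t \<in> {s, s'} \<Longrightarrow> wlen A (wmap A vs) < wlen A (wmap A (vs @ [t]))"
      by (rule exists_min_coset_factorization[OF ss, of bw w]) (use rw rwe n_def in auto)
    have H1: "length l \<le> length l'" if "wmap A l' = wmap A l" for l'
      using wlen_le[of A "vs @ l'"] wvl that len by (simp add: wmap_append n_def)
    have H2: "length l \<le> length l'" if "wmap A l' = wmap A l \<circ> sref A s" for l'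
    proof -
      have "wmap A (vs @ l') = wmap A (ws @ [s])" using wvl that wsw by (simp add: wmap_append o_assoc)
      then show ?thesis using wlen_le[of A "vs @ l'"] len wsn by simp
    qed
    obtain a b where ab: "a \<ge> 0" "b \<ge> 0" "a > 0 \<or> b > 0"
      "\<forall>y. y$s = a * (wmap A l y)$s + b * (wmap A l y)$s'"
      using rank2_reduced_positive[OF cf ss lI H1 H2] by blast
    have "\<forall>k. (wmap A vs (wmap A l y))$k > 0" using wy wvl by (auto simp: wmap_append)
    moreover have "wlen A (wmap A vs) < wlen A (wmap A ws)"
      using red vsn unfolding reduced_def n_def w_def by simp
    ultimately have "(wmap A l y)$t > 0" if "t \<in> {s, s'}" for t
      using less.hyps asc[OF that] by blast
    then show ?thesis using ab by (smt (verit) insertI1 insertI2 mult_nonneg_nonneg mult_pos_pos singletonI)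
  qed
qed

lemma reduced_word_root_pos:
  assumes "reduced A ws" "k < length ws"
  shows "(wmap A (rev (take k ws)) rhov) $ (ws ! k) > 0"
proof (rule ascent_imp_simple_pos)
  have "take k ws @ [ws ! k] = take (Suc k) ws" using assms(2) by (simp add: take_Suc_conv_app_nth)
  then show "wlen A (wmap A (take k ws)) < wlen A (wmap A (take k ws @ [ws ! k]))"
    using reduced_take[OF assms(1)] assms(2) by (simp add: reduced_def)
  show "\<forall>j. 0 < wmap A (take k ws) (wmap A (rev (take k ws)) rhov) $ j"
    by (simp add: wmap_wmap_rev[OF cf] rhov_def)
qed

end

section \<open>Integrals up to the endpoint\<close>

lemma continuous_on_atLeastLessThan_if_closed:
  fixes f :: "real \<Rightarrow> 'a::topological_space"
  assumes "\<And>b. 0 \<le> b \<Longrightarrow> b < T \<Longrightarrow> continuous_on {0..b} f"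
  shows "continuous_on {0..<T} f"
  unfolding continuous_on_eq_continuous_within
proof
  fix x :: real assume x: "x \<in> {0..<T}"
  define b where "b = (x + T) / 2"
  have "continuous_on {0..b} f" using assms[of b] x by (auto simp: b_def)
  then have "continuous (at x within {0..b}) f" using x by (auto simp: continuous_on_eq_continuous_within b_def)
  moreover have "at x within {0..<T} = at x within {0..b}"
    by (rule at_within_nhd[of x "{x - 1 <..< b}"]) (use x in \<open>auto simp: b_def\<close>)
  ultimately show "continuous (at x within {0..<T}) f" by simp
qed

lemma indefinite_integral_upto:
  fixes g :: "real \<Rightarrow> real"
  assumes cg: "continuous_on {0..<T} g"
  shows integrable_upto: "\<And>t. t \<in> {0..<T} \<Longrightarrow> g integrable_on {0..t}"
    and continuous_on_indefinite_integral_upto: "continuous_on {0..<T} (\<lambda>t. integral {0..t} g)"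
    and indefinite_integral_upto_has_derivative:
      "\<And>t. t \<in> {0<..<T} \<Longrightarrow> ((\<lambda>t. integral {0..t} g) has_real_derivative g t) (at t)"
proof -
  have cb: "continuous_on {0..b} g" if "b < T" for b
    by (rule continuous_on_subset[OF cg]) (use that in auto)
  show "g integrable_on {0..t}" if "t \<in> {0..<T}" for t
    using cb[of t] that by (auto intro: integrable_continuous_real)
  show "continuous_on {0..<T} (\<lambda>t. integral {0..t} g)"
    by (rule continuous_on_atLeastLessThan_if_closed, rule indefinite_integral_continuous_1,
        rule integrable_continuous_real, rule cb) auto
  show "((\<lambda>t. integral {0..t} g) has_real_derivative g t) (at t)" if t: "t \<in> {0<..<T}" for t
  proof -
    define b where "b = (t + T) / 2"
    have "((\<lambda>x. integral {0..x} g) has_real_derivative g t) (at t within {0..b})"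
      by (rule integral_has_real_derivative[OF cb]) (use t in \<open>auto simp: b_def\<close>)
    moreover have "at t within {0..b} = at t"
      by (rule at_within_interior) (use t in \<open>auto simp: b_def\<close>)
    ultimately show ?thesis by simp
  qed
qed

lemma has_integral_interior_antiderivative:
  fixes g F :: "real \<Rightarrow> real"
  assumes "0 \<le> t" "continuous_on {0..t} F" "\<And>x. x \<in> {0<..<t} \<Longrightarrow> (F has_real_derivative g x) (at x)"
  shows "(g has_integral (F t - F 0)) {0..t}"
  using fundamental_theorem_of_calculus_interior[OF assms(1,2)] assms(3)
  by (auto simp: has_real_derivative_iff_has_vector_derivative)

lemma continuous_on_extend_at_left:
  fixes f :: "real \<Rightarrow> 'a::topological_space"
  assumes T: "T > 0" and cf: "continuous_on {0..<T} f" and lim: "(f \<longlongrightarrow> L) (at_left T)"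
  shows "continuous_on {0..T} (\<lambda>t. if t < T then f t else L)"
  unfolding continuous_on_eq_continuous_within
proof
  fix x assume x: "x \<in> {0..T}"
  show "continuous (at x within {0..T}) (\<lambda>t. if t < T then f t else L)"
  proof (cases "x < T")
    case True
    have c: "continuous (at x within {0..<T}) f" using cf x True by (auto simp: continuous_on_eq_continuous_within)
    have e: "at x within {0..T} = at x within {0..<T}"
      by (rule at_within_nhd[of x "{x - 1 <..< T}"]) (use x True in auto)
    have ev: "\<forall>\<^sub>F t in at x within {0..<T}. f t = (if t < T then f t else L)"
      by (auto simp: eventually_at_filter)
    have "((\<lambda>t. if t < T then f t else L) \<longlongrightarrow> f x) (at x within {0..<T})"
      using c unfolding continuous_within by (rule filterlim_cong[THEN iffD1, rotated 3]) (use ev in auto)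
    then show ?thesis unfolding continuous_within e using True by simp
  next
    case False
    then have xT: "x = T" using x by simp
    have ev: "\<forall>\<^sub>F t in at_left T. f t = (if t < T then f t else L)"
      using eventually_at_left_real[OF T] by (auto elim: eventually_mono)
    have "((\<lambda>t. if t < T then f t else L) \<longlongrightarrow> L) (at_left T)"
      using lim by (rule filterlim_cong[THEN iffD1, rotated 3]) (use ev in auto)
    then show ?thesis unfolding continuous_within xT at_within_Icc_at_left[OF T] by simp
  qed
qed

lemma has_integral_left_limit:
  fixes g :: "real \<Rightarrow> real"
  assumes T: "T > 0" and cg: "continuous_on {0..<T} g"
    and lim: "((\<lambda>t. integral {0..t} g) \<longlongrightarrow> L) (at_left T)"
  shows "(g has_integral L) {0..T}"
proof -
  define F where "F = (\<lambda>t. if t < T then integral {0..t} g else L)"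
  have "continuous_on {0..T} F"
    unfolding F_def by (rule continuous_on_extend_at_left[OF T continuous_on_indefinite_integral_upto[OF cg] lim])
  moreover have "(F has_real_derivative g x) (at x)" if "x \<in> {0<..<T}" for x
    by (rule has_field_derivative_transform_within_open
        [OF indefinite_integral_upto_has_derivative[OF cg that], of "{..<T}"]) (use that in \<open>auto simp: F_def\<close>)
  ultimately have "(g has_integral (F T - F 0)) {0..T}"
    using T by (intro has_integral_interior_antiderivative) auto
  then show ?thesis using T by (simp add: F_def)
qed

lemma powr_at_left_limits:
  fixes T b :: real
  assumes T: "T > 0" and b: "b > 1"
  shows "LIM t at_left T. (T - t) powr (1 - b) :> at_top"
    and "((\<lambda>t. (T - t) powr (b - 1)) \<longlongrightarrow> 0) (at_left T)"
proof -
  have ev: "eventually (\<lambda>t. t \<in> {0<..<T}) (at_left T)" using eventually_at_left_real[OF T] .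
  have t0: "((\<lambda>t. T - t) \<longlongrightarrow> 0) (at_left T)"
    by (rule tendsto_eq_intros refl)+ (auto intro: tendsto_ident_at)
  show p0: "((\<lambda>t. (T - t) powr (b - 1)) \<longlongrightarrow> 0) (at_left T)"
    by (rule tendsto_zero_powrI[OF t0 tendsto_const]) (use ev b in \<open>auto elim: eventually_mono\<close>)
  have Ginf: "LIM t at_left T. inverse ((T - t) powr (b - 1)) :> at_top"
    by (rule filterlim_inverse_at_top[OF p0]) (use ev in \<open>auto elim: eventually_mono\<close>)
  have Geq: "inverse ((T - t) powr (b - 1)) = (T - t) powr (1 - b)" if "t < T" for t
    using that by (simp add: powr_minus[symmetric])
  show "LIM t at_left T. (T - t) powr (1 - b) :> at_top"
    using Ginf by (rule filterlim_cong[THEN iffD1, rotated 3]) (use ev Geq in \<open>auto elim: eventually_mono\<close>)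
qed

lemma indefinite_integral_asymptotic:
  fixes g :: "real \<Rightarrow> real" and T b K :: real
  assumes T: "T > 0" and cg: "continuous_on {0..<T} g" and b: "b > 1"
    and lim: "((\<lambda>t. g t * (T - t) powr b) \<longlongrightarrow> K) (at_left T)"
  shows "((\<lambda>t. integral {0..t} g * (T - t) powr (b - 1)) \<longlongrightarrow> K / (b - 1)) (at_left T)"
proof -
  have ev: "eventually (\<lambda>t. t \<in> {0<..<T}) (at_left T)" using eventually_at_left_real[OF T] .
  have dG: "((\<lambda>t. (T - t) powr (1 - b)) has_real_derivative (b - 1) * (T - t) powr (- b)) (at t)"
    if "t < T" for t
  proof -
    have "((\<lambda>t. (T - t) powr (1 - b)) has_real_derivative (1 - b) * (T - t) powr (1 - b - of_nat 1) * (-1)) (at t)"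
      by (rule DERIV_fun_powr) (use that in \<open>auto intro!: derivative_eq_intros\<close>)
    then show ?thesis by (simp add: algebra_simps)
  qed
  have "((\<lambda>t. integral {0..t} g / (T - t) powr (1 - b)) \<longlongrightarrow> K / (b - 1)) (at_left T)"
  proof (rule lhopital_left_at_top[OF powr_at_left_limits(1)[OF T b]])
    show "\<forall>\<^sub>F t in at_left T. (b - 1) * (T - t) powr (- b) \<noteq> 0"
      using ev b by (auto elim: eventually_mono)
    show "\<forall>\<^sub>F t in at_left T. ((\<lambda>t. integral {0..t} g) has_real_derivative g t) (at t)"
      using ev by (auto elim!: eventually_mono intro: indefinite_integral_upto_has_derivative[OF cg])
    show "\<forall>\<^sub>F t in at_left T. ((\<lambda>t. (T - t) powr (1 - b)) has_real_derivative (b - 1) * (T - t) powr (- b)) (at t)"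
      using ev by (auto elim!: eventually_mono intro: dG)
    have "((\<lambda>t. g t * (T - t) powr b / (b - 1)) \<longlongrightarrow> K / (b - 1)) (at_left T)"
      by (intro tendsto_divide lim tendsto_const) (use b in auto)
    then show "((\<lambda>t. g t / ((b - 1) * (T - t) powr (- b))) \<longlongrightarrow> K / (b - 1)) (at_left T)"
      by (rule filterlim_cong[THEN iffD1, rotated 3])
        (use ev in \<open>auto elim!: eventually_mono simp: powr_minus divide_simps\<close>)
  qed
  then show ?thesis
    by (rule filterlim_cong[THEN iffD1, rotated 3])
      (use ev in \<open>auto elim!: eventually_mono simp: powr_minus powr_diff divide_simps\<close>)
qed

section \<open>The maps T_{x_i(c)} and e^{-infty}_alpha_i\<close>

definition cumexp :: "'n \<Rightarrow> (real \<Rightarrow> real^'n) \<Rightarrow> real \<Rightarrow> real" where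
  "cumexp i p t = integral {0..t} (\<lambda>s. exp (- (p s $ i)))"

lemma Tx_eq_cumexp: "Tx A i c p t = p t + ln (1 + c * cumexp i p t) *\<^sub>R coroot A i"
  by (simp add: Tx_def cumexp_def)

lemma Tx_zero: "Tx A i 0 p = p"
  by (simp add: Tx_def fun_eq_iff)

lemma einf_eq_Tx: "einf A T i p = Tx A i (- 1 / cumexp i p T) p"
  by (simp add: einf_def Tx_def cumexp_def fun_eq_iff diff_divide_distrib)

lemma cumexp_zero: "cumexp i p 0 = 0"
  by (simp add: cumexp_def)

lemma cumexp_cong:
  assumes "\<forall>t\<in>{0..<T}. p t = q t" "t \<le> T"
  shows "cumexp i p t = cumexp i q t"
  unfolding cumexp_def
proof (rule integral_spike[of "{T}"])
  fix x assume "x \<in> {0..t} - {T}"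
  then show "exp (- (q x $ i)) = exp (- (p x $ i))" using assms by (auto simp: less_le)
qed simp

lemma Tx_cong:
  assumes "\<forall>t\<in>{0..<T}. p t = q t"
  shows "\<forall>t\<in>{0..<T}. Tx A i c p t = Tx A i c q t"
  using assms cumexp_cong[OF assms] by (simp add: Tx_eq_cumexp)

lemma einf_cong:
  assumes "\<forall>t\<in>{0..<T}. p t = q t"
  shows "\<forall>t\<in>{0..<T}. einf A T i p t = einf A T i q t"
  using Tx_cong[OF assms] cumexp_cong[OF assms order_refl] by (simp add: einf_eq_Tx)

lemma einf_word_Cons: "einf_word A T (j # ws) p = einf_word A T ws (einf A T j p)"
  by (simp add: einf_word_def)

lemma einf_word_cong:
  assumes "\<forall>t\<in>{0..<T}. p t = q t"
  shows "\<forall>t\<in>{0..<T}. einf_word A T ws p t = einf_word A T ws q t"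
  using assms
proof (induction ws arbitrary: p q)
  case Nil then show ?case by (simp add: einf_word_def)
next
  case (Cons j ws) then show ?case by (simp add: einf_word_Cons einf_cong)
qed

context
  fixes T :: real and p :: "real \<Rightarrow> real^'n"
  assumes cp: "continuous_on {0..<T} p"
begin

lemma continuous_on_exp_neg: "continuous_on {0..<T} (\<lambda>s. exp (- (p s $ i)))"
  by (intro continuous_intros cp)

lemma continuous_on_cumexp: "continuous_on {0..<T} (cumexp i p)"
  unfolding cumexp_def[abs_def]
  by (rule continuous_on_indefinite_integral_upto[OF continuous_on_exp_neg])

lemma cumexp_has_derivative:
  "t \<in> {0<..<T} \<Longrightarrow> (cumexp i p has_real_derivative exp (- (p t $ i))) (at t)"
  unfolding cumexp_def[abs_def]
  by (rule indefinite_integral_upto_has_derivative[OF continuous_on_exp_neg])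

lemma cumexp_nonneg: "t \<in> {0..<T} \<Longrightarrow> cumexp i p t \<ge> 0"
  unfolding cumexp_def
  by (rule integral_nonneg[OF integrable_upto[OF continuous_on_exp_neg]]) auto

lemma cumexp_less_total:
  assumes nz: "cumexp i p T \<noteq> 0" and t: "t \<in> {0..<T}"
  shows "cumexp i p t < cumexp i p T"
proof -
  let ?h = "\<lambda>s. exp (- (p s $ i))"
  have hint: "?h integrable_on {0..T}"
    using nz not_integrable_integral unfolding cumexp_def by blast
  define t' where "t' = (t + T) / 2"
  have tt': "t < t'" "t' < T" using t by (auto simp: t'_def)
  have "cumexp i p t < cumexp i p t'"
  proof (rule DERIV_pos_imp_increasing_open[OF tt'(1)])
    show "\<exists>y. (cumexp i p has_real_derivative y) (at x) \<and> y > 0" if "t < x" "x < t'" for x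
      using t tt' that by (intro exI[of _ "?h x"]) (auto intro: cumexp_has_derivative)
    show "continuous_on {t..t'} (cumexp i p)"
      by (rule continuous_on_subset[OF continuous_on_cumexp]) (use t tt' in auto)
  qed
  also have "\<dots> \<le> cumexp i p T"
  proof -
    have "integral {0..t'} ?h + integral {t'..T} ?h = integral {0..T} ?h"
      by (rule Henstock_Kurzweil_Integration.integral_combine) (use t tt' hint in auto)
    moreover have "integral {t'..T} ?h \<ge> 0"
      by (rule integral_nonneg[OF integrable_subinterval_real[OF hint]]) (use t tt' in auto)
    ultimately show ?thesis unfolding cumexp_def by simp
  qed
  finally show ?thesis .
qed

context
  fixes i :: 'n and a :: real
  assumes pos: "\<forall>t\<in>{0..<T}. 1 + a * cumexp i p t > 0"
begin

lemma continuous_on_Tx: "continuous_on {0..<T} (Tx A i a p)"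
  unfolding Tx_eq_cumexp[abs_def]
  by (intro continuous_intros cp continuous_on_cumexp) (use pos in \<open>auto simp: less_imp_neq[symmetric]\<close>)

text \<open>Since alpha_i(coroot_i) = 2, exp(-alpha_i(T_x p)) = exp(-alpha_i(p)) / (1 + a J)^2, whose
  antiderivative is J/(1 + a J).\<close>
lemma cumexp_Tx:
  assumes cf: "cartan_finite A" and t: "t \<in> {0..<T}"
  shows "cumexp i (Tx A i a p) t = cumexp i p t / (1 + a * cumexp i p t)"
proof -
  let ?J = "cumexp i p"
  define F where "F = (\<lambda>s. ?J s / (1 + a * ?J s))"
  have e: "exp (- (Tx A i a p s $ i)) = exp (- (p s $ i)) / (1 + a * ?J s)^2" if "s \<in> {0..<T}" for s
  proof -
    have "exp (- (Tx A i a p s $ i)) = exp (- (p s $ i)) / exp (ln (1 + a * ?J s)) ^ 2"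
      by (simp add: Tx_eq_cumexp coroot_nth_self[OF cf] exp_diff exp_add[symmetric] power2_eq_square)
    then show ?thesis using pos that by simp
  qed
  have "((\<lambda>s. exp (- (Tx A i a p s $ i))) has_integral (F t - F 0)) {0..t}"
  proof (rule has_integral_interior_antiderivative)
    show "continuous_on {0..t} F"
      unfolding F_def using t pos
      by (intro continuous_intros continuous_on_subset[OF continuous_on_cumexp]) (auto simp: less_imp_neq[symmetric])
    show "(F has_real_derivative exp (- (Tx A i a p s $ i))) (at s)" if s: "s \<in> {0<..<t}" for s
    proof -
      have sT: "s \<in> {0<..<T}" "s \<in> {0..<T}" using s t by auto
      have "1 + a * ?J s > 0" using pos sT(2) by blast
      have "(F has_real_derivative (exp (- (p s $ i)) * (1 + a * ?J s) - ?J s * (a * exp (- (p s $ i))))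
              / (1 + a * ?J s)^2) (at s)"
        unfolding F_def using \<open>1 + a * ?J s > 0\<close> sT
        by (auto intro!: derivative_eq_intros cumexp_has_derivative simp: power2_eq_square)
      then show ?thesis using e[OF sT(2)] by (simp add: algebra_simps)
    qed
  qed (use t in simp)
  then show ?thesis by (simp add: cumexp_def[of i "Tx A i a p"] integral_unique F_def cumexp_zero)
qed

lemma Tx_Tx:
  assumes cf: "cartan_finite A" and t: "t \<in> {0..<T}" and pos': "1 + (a + c) * cumexp i p t > 0"
  shows "Tx A i c (Tx A i a p) t = Tx A i (a + c) p t"
proof -
  let ?J = "cumexp i p t"
  have pt: "1 + a * ?J > 0" using pos t by blast
  then have "1 + c * (?J / (1 + a * ?J)) = (1 + (a + c) * ?J) / (1 + a * ?J)"
    by (simp add: field_simps)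
  then have "ln (1 + a * ?J) + ln (1 + c * (?J / (1 + a * ?J))) = ln (1 + (a + c) * ?J)"
    using pt pos' by (simp add: ln_div)
  then show ?thesis
    unfolding Tx_eq_cumexp[of A i c] cumexp_Tx[OF cf t] by (simp add: Tx_eq_cumexp scaleR_add_left[symmetric])
qed

end

end

lemma Tx_einf:
  fixes A :: "real^'n^'n" and p :: "real \<Rightarrow> real^'n"
  assumes cf: "cartan_finite A" and cp: "continuous_on {0..<T} p"
    and c: "c > 0" and hc: "c = 1 / cumexp i p T"
  shows "continuous_on {0..<T} (einf A T i p)"
    and "\<forall>t\<in>{0..<T}. Tx A i c (einf A T i p) t = p t"
proof -
  have e: "einf A T i p = Tx A i (- c) p" using hc by (simp add: einf_eq_Tx)
  have pos: "\<forall>t\<in>{0..<T}. 1 + (- c) * cumexp i p t > 0"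
  proof
    fix t assume "t \<in> {0..<T}"
    then have "c * cumexp i p t < c * cumexp i p T"
      using cumexp_less_total[OF cp] c hc by (intro mult_strict_left_mono) auto
    then show "1 + (- c) * cumexp i p t > 0" using c hc by simp
  qed
  show "continuous_on {0..<T} (einf A T i p)" unfolding e by (rule continuous_on_Tx[OF cp pos])
  show "\<forall>t\<in>{0..<T}. Tx A i c (einf A T i p) t = p t"
    unfolding e using Tx_Tx[OF cp pos cf] by (simp add: Tx_zero)
qed

lemma einf_Tx:
  fixes A :: "real^'n^'n" and q :: "real \<Rightarrow> real^'n"
  assumes cf: "cartan_finite A" and T: "T > 0" and cq: "continuous_on {0..<T} q" and c: "c > 0"
    and J_top: "filterlim (cumexp i q) at_top (at_left T)"
  shows "cumexp i (Tx A i c q) T = 1 / c"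
    and "\<forall>t\<in>{0..<T}. einf A T i (Tx A i c q) t = q t"
proof -
  let ?J = "cumexp i q"
  have pos: "\<forall>t\<in>{0..<T}. 1 + c * ?J t > 0"
    using cumexp_nonneg[OF cq] c by (simp add: add_pos_nonneg)
  have ev: "\<forall>\<^sub>F t in at_left T. t \<in> {0..<T}" using eventually_at_left_real[OF T] by (auto elim: eventually_mono)
  have "((\<lambda>t. 1 / c - inverse (c * (1 + c * ?J t))) \<longlongrightarrow> 1 / c - 0) (at_left T)"
    by (intro tendsto_intros tendsto_inverse_0_at_top filterlim_tendsto_pos_mult_at_top[OF tendsto_const c]
        filterlim_tendsto_add_at_top[OF tendsto_const] filterlim_tendsto_pos_mult_at_top[OF tendsto_const c J_top])
  then have lim: "((\<lambda>t. 1 / c - inverse (c * (1 + c * ?J t))) \<longlongrightarrow> 1 / c) (at_left T)" by simp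
  have eq: "1 / c - inverse (c * (1 + c * ?J t)) = cumexp i (Tx A i c q) t" if "t \<in> {0..<T}" for t
  proof -
    have "1 + c * ?J t > 0" using pos that by blast
    then show ?thesis
      using c that by (simp add: cumexp_Tx[OF cq pos cf] inverse_eq_divide diff_divide_distrib[symmetric] divide_simps)
  qed
  have "(cumexp i (Tx A i c q) \<longlongrightarrow> 1 / c) (at_left T)"
    using lim by (rule filterlim_cong[THEN iffD1, rotated 3]) (use ev eq in \<open>auto elim!: eventually_mono\<close>)
  then have "((\<lambda>s. exp (- (Tx A i c q s $ i))) has_integral 1 / c) {0..T}"
    unfolding cumexp_def
    by (intro has_integral_left_limit[OF T] continuous_on_exp_neg continuous_on_Tx[OF cq pos])
  then show JT: "cumexp i (Tx A i c q) T = 1 / c" by (simp add: cumexp_def integral_unique)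
  have "einf A T i (Tx A i c q) = Tx A i (- c) (Tx A i c q)" by (simp add: einf_eq_Tx JT)
  then show "\<forall>t\<in>{0..<T}. einf A T i (Tx A i c q) t = q t"
    using Tx_Tx[OF cq pos cf, of _ "- c"] by (simp add: Tx_zero)
qed

text \<open>p(t) = C + ln(T - t) r + o(1); a low path of type w has rate r = rho^vee - w^{-1} rho^vee.\<close>
definition log_asymptotic :: "real \<Rightarrow> real^'n \<Rightarrow> (real \<Rightarrow> real^'n) \<Rightarrow> bool" where
  "log_asymptotic T r p \<longleftrightarrow> (\<exists>C. ((\<lambda>t. p t - (C + ln (T - t) *\<^sub>R r)) \<longlongrightarrow> 0) (at_left T))"

context
  fixes T :: real and q :: "real \<Rightarrow> real^'n" and r :: "real^'n" and i :: 'n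
  assumes T: "T > 0" and cq: "continuous_on {0..<T} q" and asy: "log_asymptotic T r q"
    and b: "r$i > 1"
begin

lemma cumexp_asymptotic: "\<exists>L>0. ((\<lambda>t. cumexp i q t * (T - t) powr (r$i - 1)) \<longlongrightarrow> L) (at_left T)"
proof -
  obtain C where C: "((\<lambda>t. q t - (C + ln (T - t) *\<^sub>R r)) \<longlongrightarrow> 0) (at_left T)"
    using asy unfolding log_asymptotic_def by blast
  have ev: "eventually (\<lambda>t. t \<in> {0<..<T}) (at_left T)" using eventually_at_left_real[OF T] .
  have "((\<lambda>t. exp (- (q t $ i - (C$i + ln (T - t) * r$i)) - C$i)) \<longlongrightarrow> exp (- 0 - C$i)) (at_left T)"
    using tendsto_vec_nth[OF C, of i] by (intro tendsto_intros) simp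
  then have "((\<lambda>t. exp (- (q t $ i)) * (T - t) powr (r$i)) \<longlongrightarrow> exp (- (C$i))) (at_left T)"
    by (rule filterlim_cong[THEN iffD1, rotated 3])
      (use ev in \<open>auto elim!: eventually_mono simp: powr_def exp_add[symmetric] exp_diff algebra_simps\<close>)
  from indefinite_integral_asymptotic[OF T continuous_on_exp_neg[OF cq] b this]
  show ?thesis using b unfolding cumexp_def[abs_def] by (intro exI[of _ "exp (- (C$i)) / (r$i - 1)"]) auto
qed

lemma cumexp_tendsto_at_top: "filterlim (cumexp i q) at_top (at_left T)"
proof -
  obtain L where L: "L > 0" "((\<lambda>t. cumexp i q t * (T - t) powr (r$i - 1)) \<longlongrightarrow> L) (at_left T)"
    using cumexp_asymptotic by blast
  have "LIM t at_left T. cumexp i q t * (T - t) powr (r$i - 1) * (T - t) powr (1 - r$i) :> at_top"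
    by (rule filterlim_tendsto_pos_mult_at_top[OF L(2) L(1) powr_at_left_limits(1)[OF T b]])
  then show ?thesis
    by (rule filterlim_cong[THEN iffD1, rotated 3])
      (use eventually_at_left_real[OF T] in \<open>auto elim!: eventually_mono simp: powr_add[symmetric]\<close>)
qed

text \<open>J grows like (T - t)^(1 - alpha_i(r)), so ln (1 + c J) ~ (1 - alpha_i(r)) ln (T - t).\<close>
lemma log_asymptotic_Tx:
  assumes c: "c > 0"
  shows "log_asymptotic T (r - (r$i - 1) *\<^sub>R coroot A i) (Tx A i c q)"
proof -
  let ?J = "cumexp i q" and ?b = "r$i"
  obtain C where C: "((\<lambda>t. q t - (C + ln (T - t) *\<^sub>R r)) \<longlongrightarrow> 0) (at_left T)"
    using asy unfolding log_asymptotic_def by blast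
  obtain L where L: "L > 0" "((\<lambda>t. ?J t * (T - t) powr (?b - 1)) \<longlongrightarrow> L) (at_left T)"
    using cumexp_asymptotic by blast
  have ev: "eventually (\<lambda>t. t \<in> {0<..<T}) (at_left T)" using eventually_at_left_real[OF T] .
  have "((\<lambda>t. (T - t) powr (?b - 1) + c * (?J t * (T - t) powr (?b - 1))) \<longlongrightarrow> 0 + c * L) (at_left T)"
    by (intro tendsto_intros powr_at_left_limits(2)[OF T b] L(2))
  then have lim: "((\<lambda>t. ln ((T - t) powr (?b - 1) + c * (?J t * (T - t) powr (?b - 1)))) \<longlongrightarrow> ln (c * L)) (at_left T)"
    by (intro tendsto_ln) (use c L in auto)
  have eq: "ln ((T - t) powr (?b - 1) + c * (?J t * (T - t) powr (?b - 1))) =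
      ln (1 + c * ?J t) + (?b - 1) * ln (T - t)" if "t \<in> {0<..<T}" for t
  proof -
    have "1 + c * ?J t > 0" using cumexp_nonneg[OF cq, of t i] c that by (simp add: add_pos_nonneg)
    moreover have "(T - t) powr (?b - 1) + c * (?J t * (T - t) powr (?b - 1)) = (1 + c * ?J t) * (T - t) powr (?b - 1)"
      by (simp add: algebra_simps)
    ultimately show ?thesis using that by (simp add: ln_mult_pos ln_powr)
  qed
  have lnlim: "((\<lambda>t. ln (1 + c * ?J t) + (?b - 1) * ln (T - t)) \<longlongrightarrow> ln (c * L)) (at_left T)"
    using lim by (rule filterlim_cong[THEN iffD1, rotated 3]) (use ev eq in \<open>auto elim!: eventually_mono\<close>)
  have "((\<lambda>t. (q t - (C + ln (T - t) *\<^sub>R r)) + (ln (1 + c * ?J t) + (?b - 1) * ln (T - t) - ln (c * L)) *\<^sub>R coroot A i)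
      \<longlongrightarrow> 0 + (ln (c * L) - ln (c * L)) *\<^sub>R coroot A i) (at_left T)"
    by (intro tendsto_intros C lnlim)
  then have "((\<lambda>t. Tx A i c q t - ((C + ln (c * L) *\<^sub>R coroot A i) + ln (T - t) *\<^sub>R (r - (?b - 1) *\<^sub>R coroot A i)))
      \<longlongrightarrow> 0) (at_left T)"
    by (simp add: Tx_eq_cumexp algebra_simps)
  then show ?thesis unfolding log_asymptotic_def by blast
qed

end

section \<open>Pushing the asymptotics through T_z\<close>

lemma log_asymptotic_zero_tendsto:
  assumes "log_asymptotic T 0 p"
  shows "\<exists>C. (p \<longlongrightarrow> C) (at_left T)"
proof -
  obtain C where "((\<lambda>t. p t - C) \<longlongrightarrow> 0) (at_left T)"
    using assms unfolding log_asymptotic_def by auto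
  then have "((\<lambda>t. (p t - C) + C) \<longlongrightarrow> 0 + C) (at_left T)" by (intro tendsto_intros)
  then show ?thesis by auto
qed

lemma eq_on_Icc_if_eq_on_Ico:
  fixes p q :: "real \<Rightarrow> 'a::t2_space"
  assumes T: "T > 0" and "continuous_on {0..T} p" "continuous_on {0..T} q" and eq: "\<forall>t\<in>{0..<T}. q t = p t"
  shows "\<forall>t\<in>{0..T}. q t = p t"
proof -
  have "(p \<longlongrightarrow> p T) (at_left T)" "(q \<longlongrightarrow> q T) (at_left T)"
    using assms(2,3) T unfolding continuous_on_def at_within_Icc_at_left[OF T, symmetric] by auto
  moreover have "\<forall>\<^sub>F t in at_left T. p t = q t"
    using eventually_at_left_real[OF T] eq by (auto elim!: eventually_mono)
  ultimately have "q T = p T"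
    using tendsto_unique[of "at_left T"] filterlim_cong[OF refl refl, of p q] by force
  then show ?thesis using eq by (auto simp: less_le)
qed

context
  fixes A :: "real^'n^'n"
  assumes cf: "cartan_finite A"
begin

text \<open>Here rhov - wmap A (rev u) rhov is the rate rho^vee - u^{-1} rho^vee, and its j-th
  coordinate after appending j is the exponent 1 + (u alpha_j)(rho^vee).\<close>
lemma rate_nth_snoc:
  "(rhov - wmap A (rev (u @ [j])) rhov) $ j = 1 + wmap A (rev u) rhov $ j"
  by (simp add: sref_nth_self[OF cf] rhov_def)

lemma rate_snoc_shift:
  "(rhov - wmap A (rev (u @ [j])) rhov) - ((rhov - wmap A (rev (u @ [j])) rhov) $ j - 1) *\<^sub>R coroot A j
     = rhov - wmap A (rev u) rhov"
  unfolding rate_nth_snoc by (simp add: sref_def algebra_simps)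

lemma rate_nth_snoc_gt_1:
  assumes "reduced A (u @ j # ws)"
  shows "(rhov - wmap A (rev (u @ [j])) rhov) $ j > 1"
  unfolding rate_nth_snoc using reduced_word_root_pos[OF cf assms, of "length u"] by simp

lemma Tz_log_asymptotic:
  assumes T: "T > 0" and red: "reduced A (u @ ws)"
    and ts: "length ts = length ws" "\<forall>c\<in>set ts. c > 0"
    and c\<eta>: "continuous_on {0..<T} \<eta>" and asy: "log_asymptotic T (rhov - wmap A (rev (u @ ws)) rhov) \<eta>"
  shows "continuous_on {0..<T} (Tz A (zip ws ts) \<eta>) \<and> Tz A (zip ws ts) \<eta> 0 = \<eta> 0 \<and>
         log_asymptotic T (rhov - wmap A (rev u) rhov) (Tz A (zip ws ts) \<eta>)"
  using red ts asy
proof (induction ws arbitrary: u ts)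
  case Nil then show ?case using c\<eta> by simp
next
  case (Cons j ws)
  then obtain c ts' where tsc: "ts = c # ts'" and c: "c > 0" by (cases ts) auto
  let ?\<zeta> = "Tz A (zip ws ts') \<eta>"
  have IH: "continuous_on {0..<T} ?\<zeta>" "?\<zeta> 0 = \<eta> 0" "log_asymptotic T (rhov - wmap A (rev (u @ [j])) rhov) ?\<zeta>"
    using Cons.IH[of "u @ [j]" ts'] Cons.prems tsc by auto
  have pos: "\<forall>t\<in>{0..<T}. 1 + c * cumexp j ?\<zeta> t > 0"
    using cumexp_nonneg[OF IH(1)] c by (simp add: add_pos_nonneg)
  have "Tx A j c ?\<zeta> 0 = ?\<zeta> 0" by (simp add: Tx_eq_cumexp cumexp_zero)
  then show ?case
    using continuous_on_Tx[OF IH(1) pos] IH(2)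
      log_asymptotic_Tx[OF T IH(1,3) rate_nth_snoc_gt_1[OF Cons.prems(1)] c, where A = A,
        unfolded rate_snoc_shift]
    by (simp add: tsc)
qed

lemma einf_word_Tz:
  assumes T: "T > 0" and red: "reduced A (u @ ws)"
    and ts: "length ts = length ws" "\<forall>c\<in>set ts. c > 0"
    and c\<eta>: "continuous_on {0..<T} \<eta>" and asy: "log_asymptotic T (rhov - wmap A (rev (u @ ws)) rhov) \<eta>"
  shows "(\<forall>t\<in>{0..<T}. einf_word A T ws (Tz A (zip ws ts) \<eta>) t = \<eta> t) \<and>
         (\<forall>k<length ws. cumexp (ws ! k) (einf_word A T (take k ws) (Tz A (zip ws ts) \<eta>)) T = 1 / ts ! k)"
  using red ts asy
proof (induction ws arbitrary: u ts)
  case Nil then show ?case by (simp add: einf_word_def)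
next
  case (Cons j ws)
  then obtain c ts' where tsc: "ts = c # ts'" and c: "c > 0" by (cases ts) auto
  let ?\<zeta> = "Tz A (zip ws ts') \<eta>"
  have red': "reduced A ((u @ [j]) @ ws)" using Cons.prems(1) by simp
  have \<zeta>: "continuous_on {0..<T} ?\<zeta>" "log_asymptotic T (rhov - wmap A (rev (u @ [j])) rhov) ?\<zeta>"
    using Tz_log_asymptotic[OF T red'] Cons.prems tsc c\<eta> by auto
  have IH: "\<forall>t\<in>{0..<T}. einf_word A T ws ?\<zeta> t = \<eta> t"
    "\<forall>k<length ws. cumexp (ws ! k) (einf_word A T (take k ws) ?\<zeta>) T = 1 / ts' ! k"
    using Cons.IH[OF red'] Cons.prems tsc by auto
  have J_top: "filterlim (cumexp j ?\<zeta>) at_top (at_left T)"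
    by (rule cumexp_tendsto_at_top[OF T \<zeta> rate_nth_snoc_gt_1[OF Cons.prems(1)]])
  note e = einf_Tx[OF cf T \<zeta>(1) c J_top]
  have undo: "\<forall>t\<in>{0..<T}. einf_word A T vs (einf A T j (Tx A j c ?\<zeta>)) t = einf_word A T vs ?\<zeta> t" for vs
    by (rule einf_word_cong[OF e(2)])
  have "\<forall>t\<in>{0..<T}. einf_word A T (j # ws) (Tx A j c ?\<zeta>) t = \<eta> t"
    using undo[of ws] IH(1) by (simp add: einf_word_Cons)
  moreover have "cumexp ((j # ws) ! k) (einf_word A T (take k (j # ws)) (Tx A j c ?\<zeta>)) T = 1 / (c # ts') ! k"
    if "k < length (j # ws)" for k
  proof (cases k)
    case 0 then show ?thesis using e(1) by (simp add: einf_word_def)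
  next
    case (Suc k')
    then show ?thesis using that IH(2) cumexp_cong[OF undo[of "take k' ws"] order_refl]
      by (simp add: einf_word_Cons)
  qed
  ultimately show ?case by (simp add: tsc)
qed

lemma Tz_of_einf_word:
  assumes cq: "continuous_on {0..<T} q"
    and ts: "length ts = length ws" "\<forall>c\<in>set ts. c > 0"
    and e: "\<forall>t\<in>{0..<T}. einf_word A T ws q t = \<eta> t"
    and tk: "\<forall>k<length ws. ts ! k = 1 / cumexp (ws ! k) (einf_word A T (take k ws) q) T"
  shows "\<forall>t\<in>{0..<T}. q t = Tz A (zip ws ts) \<eta> t"
  using cq ts e tk
proof (induction ws arbitrary: q ts)
  case Nil then show ?case by (simp add: einf_word_def)
next
  case (Cons j ws)
  then obtain c ts' where tsc: "ts = c # ts'" and c: "c > 0" by (cases ts) auto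
  have hc: "c = 1 / cumexp j q T" using Cons.prems(5) tsc by (auto simp: einf_word_def)
  note inv = Tx_einf[OF cf Cons.prems(1) c hc]
  have "\<forall>t\<in>{0..<T}. einf A T j q t = Tz A (zip ws ts') \<eta> t"
  proof (rule Cons.IH[OF inv(1)])
    show "\<forall>k<length ws. ts' ! k = 1 / cumexp (ws ! k) (einf_word A T (take k ws) (einf A T j q)) T"
      using Cons.prems(5) tsc by (auto simp: einf_word_Cons)
  qed (use Cons.prems tsc in \<open>auto simp: einf_word_Cons\<close>)
  then have "\<forall>t\<in>{0..<T}. Tx A j c (einf A T j q) t = Tx A j c (Tz A (zip ws ts') \<eta>) t"
    by (rule Tx_cong)
  then show ?case using inv(2) tsc by auto
qed

lemma low_path_log_asymptotic:
  assumes "low_path A T (wmap A ws) \<eta>"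
  shows "continuous_on {0..<T} \<eta>" and "\<eta> 0 = 0"
    and "log_asymptotic T (rhov - wmap A (rev ws) rhov) \<eta>"
proof -
  obtain C where "continuous_on {0..<T} \<eta>" "\<eta> 0 = 0" and
    C: "((\<lambda>t. \<eta> t - (C + ln (T - t) *\<^sub>R (rhov - wmap A (rev ws) rhov) + cconst A (wmap A ws)))
          \<longlongrightarrow> 0) (at_left T)"
    using assms unfolding low_path_def inv_wmap[OF cf] by blast
  moreover have "log_asymptotic T (rhov - wmap A (rev ws) rhov) \<eta>"
    unfolding log_asymptotic_def using C
    by (intro exI[of _ "C + cconst A (wmap A ws)"]) (simp add: algebra_simps)
  ultimately show "continuous_on {0..<T} \<eta>" "\<eta> 0 = 0" "log_asymptotic T (rhov - wmap A (rev ws) rhov) \<eta>"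
    by blast+
qed

lemma sol_cond_if_eq_Tz:
  assumes T: "T > 0" and red: "reduced A ws"
    and ts: "length ts = length ws" "\<forall>c\<in>set ts. c > 0"
    and c\<eta>: "continuous_on {0..<T} \<eta>" and asy: "log_asymptotic T (rhov - wmap A (rev ws) rhov) \<eta>"
    and cp: "continuous_on {0..T} p" and p0: "p 0 = 0" and p: "\<forall>t\<in>{0..<T}. p t = Tz A (zip ws ts) \<eta> t"
  shows "sol_cond A T ws ts \<eta> p"
proof -
  have E: "\<forall>t\<in>{0..<T}. einf_word A T ws (Tz A (zip ws ts) \<eta>) t = \<eta> t"
    "\<forall>k<length ws. cumexp (ws ! k) (einf_word A T (take k ws) (Tz A (zip ws ts) \<eta>)) T = 1 / ts ! k"
    using einf_word_Tz[of T "[]", OF T _ ts c\<eta>] red asy by auto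
  have cong: "\<forall>t\<in>{0..<T}. einf_word A T vs p t = einf_word A T vs (Tz A (zip ws ts) \<eta>) t" for vs
    by (rule einf_word_cong[OF p])
  show ?thesis
    unfolding sol_cond_def
  proof (intro conjI cp p0 allI impI)
    show "\<forall>t\<in>{0..<T}. einf_word A T ws p t = \<eta> t" using cong[of ws] E(1) by simp
    fix k assume "k < length ws"
    then show "ts ! k = 1 / integral {0..T} (\<lambda>s. exp (- (einf_word A T (take k ws) p s $ (ws ! k))))"
      using E(2) cumexp_cong[OF cong order_refl] by (simp add: cumexp_def)
  qed
qed

end

theorem mainTheorem19:
  fixes A :: "real^'n^'n" and T :: real and \<eta> :: "real \<Rightarrow> real^'n"
    and w0 :: "real^'n \<Rightarrow> real^'n" and ws :: "'n list" and ts :: "real list"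
  assumes "cartan_finite A"
    and "T > 0"
    and "is_longest A w0"
    and "low_path A T w0 \<eta>"
    and "wmap A ws = w0" and "length ws = wlen A w0"
    and "length ts = length ws" and "\<forall>c\<in>set ts. c > 0"
  shows "\<exists>p. sol_cond A T ws ts \<eta> p \<and> (\<forall>t\<in>{0..<T}. p t = Tz A (zip ws ts) \<eta> t) \<and>
             (\<forall>q. sol_cond A T ws ts \<eta> q \<longrightarrow> (\<forall>t\<in>{0..T}. q t = p t))"
proof -
  note cf = assms(1) and T = assms(2) and ts = assms(7,8)
  have red: "reduced A ws" using assms(5,6) by (simp add: reduced_def)
  note low = low_path_log_asymptotic[OF cf assms(4)[folded assms(5)]]
  note c\<eta> = low(1) and asy = low(3)
  define \<zeta> where "\<zeta> = Tz A (zip ws ts) \<eta>"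
  have c\<zeta>: "continuous_on {0..<T} \<zeta>" and "\<zeta> 0 = 0" and "log_asymptotic T 0 \<zeta>"
    using Tz_log_asymptotic[OF cf T, of "[]"] red ts c\<eta> asy low(2) by (auto simp: \<zeta>_def)
  then obtain L where "(\<zeta> \<longlongrightarrow> L) (at_left T)" using log_asymptotic_zero_tendsto by blast
  define p where "p = (\<lambda>t. if t < T then \<zeta> t else L)"
  have cp: "continuous_on {0..T} p"
    unfolding p_def by (rule continuous_on_extend_at_left[OF T c\<zeta> \<open>(\<zeta> \<longlongrightarrow> L) (at_left T)\<close>])
  have p\<zeta>: "\<forall>t\<in>{0..<T}. p t = \<zeta> t" by (simp add: p_def)
  have "sol_cond A T ws ts \<eta> p"
    using sol_cond_if_eq_Tz[OF cf T red ts c\<eta> asy cp] p\<zeta> T \<open>\<zeta> 0 = 0\<close> by (simp add: p_def \<zeta>_def)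
  moreover have "\<forall>t\<in>{0..T}. q t = p t" if "sol_cond A T ws ts \<eta> q" for q
  proof (rule eq_on_Icc_if_eq_on_Ico[OF T cp])
    show cq: "continuous_on {0..T} q" using that by (simp add: sol_cond_def)
    have "\<forall>t\<in>{0..<T}. q t = \<zeta> t" unfolding \<zeta>_def
      by (rule Tz_of_einf_word[OF cf continuous_on_subset[OF cq] ts])
        (use that in \<open>auto simp: sol_cond_def cumexp_def\<close>)
    then show "\<forall>t\<in>{0..<T}. q t = p t" using p\<zeta> by simp
  qed
  ultimately show ?thesis using p\<zeta> unfolding \<zeta>_def by blast
qed

end
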